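(* There is an absolute constant $K$ such that the following holds. Let $n \ge 1$ and $0 \le c < n$ be integers, and let $(h(i))_{i \ge 0}$ be a Fibonacci-automatic sequence generated by a Fibonacci-DFAO with $m$ states. Then there is a Fibonacci-DFAO with at most $K m^2 n^4$ states generating the linear subsequence $(h(ni+c))_{i \ge 0}$.
   Context: Fibonacci numbers $F_0=0,F_1=1,F_k=F_{k-1}+F_{k-2}$; for a binary word $x=x_1\cdots x_\ell$, $[x]=\sum_j x_j F_{\ell-j+2}$; a valid Fibonacci representation is a binary word with no factor $11$ (leading zeros allowed). A Fibonacci-DFAO is a deterministic finite automaton with output $(Q,\{0,1\},\delta,q_0,\Delta,\tau)$ (partial $\delta$ allowed) reading valid Fibonacci representations most significant digit first, with output independent of leading zeros; it generates $(h(i))_{i\ge0}$ if $h(i)=\tau(\delta(q_0,x))$ for every valid $x$ with $[x]=i$. A sequence is Fibonacci-automatic if some Fibonacci-DFAO generates it. *)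

theory Defs
  imports "HOL-Number_Theory.Fib"
begin

(* Binary words: True = digit 1, False = digit 0, most significant digit first. *)

definition fib_val :: "bool list \<Rightarrow> nat" where
  "fib_val x = (\<Sum>j<length x. (if x ! j then fib (length x - j + 1) else 0))"

definition fib_valid :: "bool list \<Rightarrow> bool" where
  "fib_valid x \<longleftrightarrow> (\<forall>i. Suc i < length x \<longrightarrow> \<not> (x ! i \<and> x ! Suc i))"

fun run :: "('q \<Rightarrow> bool \<Rightarrow> 'q option) \<Rightarrow> 'q \<Rightarrow> bool list \<Rightarrow> 'q option" where
  "run \<delta> q [] = Some q"
| "run \<delta> q (a # w) = (case \<delta> q a of None \<Rightarrow> None | Some q' \<Rightarrow> run \<delta> q' w)"

definition fib_dfao :: "'q set \<Rightarrow> ('q \<Rightarrow> bool \<Rightarrow> 'q option) \<Rightarrow> 'q \<Rightarrow> ('q \<Rightarrow> 'o) \<Rightarrow> bool" where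
  "fib_dfao Q \<delta> q0 \<tau> \<longleftrightarrow>
     finite Q \<and> q0 \<in> Q \<and>
     (\<forall>q\<in>Q. \<forall>a q'. \<delta> q a = Some q' \<longrightarrow> q' \<in> Q) \<and>
     (\<forall>x k. fib_valid x \<longrightarrow>
        map_option \<tau> (run \<delta> q0 (replicate k False @ x)) = map_option \<tau> (run \<delta> q0 x))"

definition fib_generates :: "('q \<Rightarrow> bool \<Rightarrow> 'q option) \<Rightarrow> 'q \<Rightarrow> ('q \<Rightarrow> 'o) \<Rightarrow> (nat \<Rightarrow> 'o) \<Rightarrow> bool" where
  "fib_generates \<delta> q0 \<tau> h \<longleftrightarrow>
     (\<forall>x. fib_valid x \<longrightarrow> map_option \<tau> (run \<delta> q0 x) = Some (h (fib_val x)))"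

end

theory Submission
  imports Defs "HOL-Library.Countable"
begin

(* A Myhill-Nerode argument: the subsequence is generated by an automaton whose states are the
   residual maps u \<mapsto> h(n[wu] + c) of words w, so it suffices to bound their number by
   O(m^2 n^2).  Fix j with 3n \<le> F_j \<le> 6n.  For [w] \<ge> 1 there is a valid word P for which
   d1 = n[w] - [P 0^(j+1)] and d2 = n[w0] - [P 0^(j+2)] are nonnegative and O(n); this rests on
   [x] - \<phi>[x]' lying in (-1, \<phi> - 1) for valid x, where [x]' lowers every weight F_k to F_(k-1).
   Since n[w 0^r] and [P 0^(j+1+r)] both satisfy the Fibonacci recurrence in r, we get
   n[wu] + c = [P 0^L] + off with L = j + 1 + |u| and off < 2 F_(L+1) depending only on d1, d2, u.
   So n[wu] + c is represented by P, or by the successor of P, followed by a suffix of known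
   value, and the residual of w is determined by the states reached on these two prefixes, by d1,
   d2, and by three bits. *)

section \<open>Values and validity of Fibonacci words\<close>

definition fib_val_shift :: "bool list \<Rightarrow> nat" where
  "fib_val_shift x = (\<Sum>j<length x. if x ! j then fib (length x - j) else 0)"

lemma fib_val_Nil [simp]: "fib_val [] = 0"
  by (simp add: fib_val_def)

lemma fib_val_shift_Nil [simp]: "fib_val_shift [] = 0"
  by (simp add: fib_val_shift_def)

lemma fib_val_Cons: "fib_val (a # x) = (if a then fib (length x + 2) else 0) + fib_val x"
  unfolding fib_val_def length_Cons sum.lessThan_Suc_shift by (auto intro!: sum.cong)

lemma fib_val_shift_Cons:
  "fib_val_shift (a # x) = (if a then fib (length x + 1) else 0) + fib_val_shift x"
  unfolding fib_val_shift_def length_Cons sum.lessThan_Suc_shift by (auto intro!: sum.cong)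

lemma fib_val_append:
  "fib_val (x @ y) = fib_val x * fib (length y + 1) + fib_val_shift x * fib (length y) + fib_val y"
proof (induction x)
  case (Cons a x)
  have "fib (length x + length y + 2) = fib (length x + 2) * fib (length y + 1) + fib (length x + 1) * fib (length y)"
    using fib_add[of "length y" "length x + 1"] by (simp add: ac_simps)
  with Cons show ?case by (simp add: fib_val_Cons fib_val_shift_Cons algebra_simps)
qed simp

lemma fib_val_snoc: "fib_val (x @ [a]) = fib_val x + fib_val_shift x + of_bool a"
  using fib_val_append[of x "[a]"] by (simp add: fib_val_Cons)

lemma fib_val_shift_snoc: "fib_val_shift (x @ [a]) = fib_val x + of_bool a"
  by (induction x) (auto simp: fib_val_shift_Cons fib_val_Cons)

lemma fib_val_replicate_append [simp]: "fib_val (replicate k False @ x) = fib_val x"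
  by (induction k) (auto simp: fib_val_Cons)

lemma fib_val_replicate [simp]: "fib_val (replicate k False) = 0"
  using fib_val_replicate_append[of k "[]"] by simp

lemma fib_val_shift_replicate [simp]: "fib_val_shift (replicate k False) = 0"
  by (induction k) (simp_all add: fib_val_shift_Cons)

lemma fib_val_append_pad: "fib_val (x @ y) = fib_val (x @ replicate (length y) False) + fib_val y"
  by (simp add: fib_val_append)

lemma fib_val_append_replicate_recurrence:
  "fib_val (x @ replicate (Suc (Suc r)) False)
     = fib_val (x @ replicate (Suc r) False) + fib_val (x @ replicate r False)"
  by (simp add: fib_val_append fib_val_Cons algebra_simps)

lemma fib_val_append_replicate:
  "fib_val (x @ replicate r False) = gen_fib (fib_val x) (fib_val (x @ [False])) r"
proof (induction r rule: fib.induct)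
  case (3 r)
  then show ?case
    by (simp only: fib_val_append_replicate_recurrence gen_fib_recurrence)
qed simp_all

lemma fib_val_eq_0D: "fib_val x = 0 \<Longrightarrow> x = replicate (length x) False"
proof (induction x)
  case (Cons a x)
  with fib_neq_0_nat[of "length x + 2"] show ?case
    by (auto simp: fib_val_Cons split: if_splits)
qed simp

lemma fib_valid_Cons_Cons [simp]: "fib_valid (a # b # y) \<longleftrightarrow> \<not> (a \<and> b) \<and> fib_valid (b # y)"
  unfolding fib_valid_def by (auto simp: All_less_Suc2 nth_Cons split: nat.splits)

lemma fib_valid_Nil [simp]: "fib_valid []" and fib_valid_single [simp]: "fib_valid [a]"
  by (simp_all add: fib_valid_def)

lemma fib_valid_Cons: "fib_valid (a # x) \<longleftrightarrow> fib_valid x \<and> \<not> (a \<and> x \<noteq> [] \<and> hd x)"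
  by (cases x) auto

lemma fib_valid_False_Cons [simp]: "fib_valid (False # x) = fib_valid x"
  by (simp add: fib_valid_Cons)

lemma fib_valid_append: "fib_valid (x @ y) \<longleftrightarrow> fib_valid x \<and> fib_valid ((x \<noteq> [] \<and> last x) # y)"
  by (induction x) (auto simp: fib_valid_Cons)

lemma fib_valid_replicate_append [simp]: "fib_valid (replicate k False @ x) = fib_valid x"
  by (induction k) auto

lemma fib_valid_replicate [simp]: "fib_valid (replicate k False)"
  using fib_valid_replicate_append[of k "[]"] by simp

lemma fib_valid_append_replicate [simp]: "fib_valid (x @ replicate k False) = fib_valid x"
  by (cases k) (simp_all add: fib_valid_append)

lemma fib_val_less: "fib_valid x \<Longrightarrow> fib_val x < fib (length x + 2)"
proof (induction x rule: induct_list012)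
  case (3 a b y)
  then show ?case
    using fib_Suc_mono[of "length y + 3"]
    by (auto simp: fib_val_Cons numeral_eq_Suc)
qed (simp_all add: fib_val_Cons numeral_eq_Suc)

lemma fib_rep_exists:
  "N < fib (L + (if b then 1 else 2)) \<Longrightarrow> \<exists>x. length x = L \<and> fib_valid (b # x) \<and> fib_val x = N"
proof (induction L arbitrary: N b)
  case 0
  then show ?case by (intro exI[of _ "[]"]) (auto simp: numeral_eq_Suc split: if_splits)
next
  case (Suc l)
  show ?case
  proof (cases "N < fib (l + 2)")
    case True
    with Suc.IH[of N False] obtain y where "length y = l" "fib_valid y" "fib_val y = N"
      by auto
    then show ?thesis
      by (intro exI[of _ "False # y"]) (simp add: fib_val_Cons)
  next
    case False
    with Suc.prems have "\<not> b" "N - fib (l + 2) < fib (l + 1)"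
      by (auto simp: numeral_eq_Suc split: if_splits)
    with Suc.IH[of "N - fib (l + 2)" True] obtain y
      where "length y = l" "fib_valid (True # y)" "fib_val y = N - fib (l + 2)"
      by auto
    with False \<open>\<not> b\<close> show ?thesis
      by (intro exI[of _ "True # y"]) (simp add: fib_val_Cons)
  qed
qed

lemma less_fib_add_2: "n < fib (n + 2)"
proof (induction n)
  case (Suc n)
  with fib_neq_0_nat[of "Suc n"] show ?case by simp
qed simp

lemma fib_between:
  assumes "1 \<le> N"
  obtains j where "N \<le> fib j" "fib j \<le> 2 * N"
proof -
  define j where "j = (LEAST j. N \<le> fib j)"
  have "N \<le> fib (N + 2)"
    using less_fib_add_2 less_imp_le by blast
  then have "N \<le> fib j"
    unfolding j_def by (rule LeastI)
  moreover have "fib j \<le> 2 * N"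
  proof (cases j rule: fib.cases)
    case (3 i)
    then have "fib i < N" "fib (Suc i) < N"
      using not_less_Least[of _ "\<lambda>j. N \<le> fib j"] unfolding j_def by (metis lessI less_SucI not_le)+
    then show ?thesis
      using 3 by simp
  qed (use assms in simp_all)
  ultimately show thesis
    by (rule that)
qed

lemma fib_rep_any:
  obtains x where "fib_valid x" "fib_val x = N"
  using fib_rep_exists[of N N False] less_fib_add_2[of N] by auto

lemma fib_rep_split:
  obtains P s where "fib_valid (P @ s)" "length s = k" "fib_val (P @ s) = N"
proof -
  obtain x where "fib_valid x" "fib_val x = N"
    by (rule fib_rep_any)
  moreover define x' where "x' = replicate k False @ x"
  ultimately have "fib_valid x'" "fib_val x'= N" "k \<le> length x'"
    by simp_all
  then show thesis
    by (intro that[of "take (length x' - k) x'" "drop (length x' - k) x'"]) simp_all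
qed

definition fib_rep :: "bool \<Rightarrow> nat \<Rightarrow> nat \<Rightarrow> bool list" where
  "fib_rep b L N = (SOME x. length x = L \<and> fib_valid (b # x) \<and> fib_val x = N)"

lemma fib_rep:
  assumes "N < fib (L + (if b then 1 else 2))"
  shows "length (fib_rep b L N) = L" "fib_valid (b # fib_rep b L N)" "fib_val (fib_rep b L N) = N"
  using someI_ex[OF fib_rep_exists[OF assms]] unfolding fib_rep_def by blast+

section \<open>The golden-ratio error term\<close>

definition \<phi> :: real where "\<phi> = (1 + sqrt 5) / 2"

lemma \<phi>_square: "\<phi> * \<phi> = \<phi> + 1"
  unfolding \<phi>_def by (simp add: field_simps)

lemma \<phi>_square': "\<phi> * (\<phi> * x) = \<phi> * x + x"
  by (simp add: mult.assoc[symmetric] \<phi>_square algebra_simps)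

lemma \<phi>_gt_1: "1 < \<phi>" and \<phi>_less_2: "\<phi> < 2"
proof -
  have "1 < sqrt 5" "sqrt 5 < 3"
    by (simp_all add: real_less_rsqrt real_less_lsqrt)
  then show "1 < \<phi>" "\<phi> < 2"
    unfolding \<phi>_def by simp_all
qed

definition fib_err :: "bool list \<Rightarrow> real" where
  "fib_err x = real (fib_val x) - \<phi> * real (fib_val_shift x)"

lemma fib_err_eq: "fib_err x = (1 + \<phi>) * fib_val x - \<phi> * fib_val (x @ [False])"
  by (simp add: fib_err_def fib_val_snoc algebra_simps)

lemma fib_err_snoc: "fib_err (x @ [a]) = (1 - \<phi>) * (fib_err x + of_bool a)"
proof -
  have "(1 - \<phi>) * (fib_err x + of_bool a)
      = fib_val x + of_bool a - \<phi> * (fib_val x + of_bool a) + (\<phi> * \<phi> - \<phi>) * fib_val_shift x"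
    by (simp add: fib_err_def algebra_simps)
  then show ?thesis
    by (simp add: fib_err_def fib_val_snoc fib_val_shift_snoc \<phi>_square)
qed

lemma fib_err_bounds:
  "fib_valid x \<Longrightarrow> (if x \<noteq> [] \<and> last x then -1 < fib_err x \<and> fib_err x < \<phi> - 2
                    else \<phi> - 2 < fib_err x \<and> fib_err x < \<phi> - 1)"
proof (induction x rule: rev_induct)
  case Nil
  then show ?case using \<phi>_gt_1 \<phi>_less_2 by (simp add: fib_err_def)
next
  case (snoc a x)
  then have "fib_valid x" and no_11: "x \<noteq> [] \<and> last x \<Longrightarrow> \<not> a"
    by (auto simp: fib_valid_append)
  with snoc.IH have lower: "-1 + of_bool a * \<phi> < fib_err x + of_bool a" and upper: "fib_err x < \<phi> - 1"
    using \<phi>_gt_1 by (auto split: if_splits)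
  have neg: "1 - \<phi> < 0"
    using \<phi>_gt_1 by simp
  have "(1 - \<phi>) * (\<phi> - 1 + of_bool a) < (1 - \<phi>) * (fib_err x + of_bool a)"
    using upper neg by (simp add: mult_strict_left_mono_neg)
  moreover have "(1 - \<phi>) * (fib_err x + of_bool a) < (1 - \<phi>) * (-1 + of_bool a * \<phi>)"
    using lower neg by (simp add: mult_strict_left_mono_neg)
  moreover have "(1 - \<phi>) * (\<phi> - 1) = \<phi> - 2" "(1 - \<phi>) * \<phi> = -1"
    using \<phi>_square by (simp_all add: algebra_simps)
  ultimately show ?case
    using \<phi>_less_2 by (cases a) (simp_all add: fib_err_snoc)
qed

lemma fib_err_gt: "fib_valid x \<Longrightarrow> -1 < fib_err x"
  using fib_err_bounds[of x] \<phi>_gt_1 by (auto split: if_splits)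

lemma fib_err_less: "fib_valid x \<Longrightarrow> fib_err x < \<phi> - 1"
  using fib_err_bounds[of x] by (auto split: if_splits)

lemma fib_add_2_less: "\<phi> * fib (k + 2) < \<phi> * fib (k + 1) + fib (k + 1) + 1"
proof -
  have "fib_err (True # replicate k False) < \<phi> - 1"
    by (rule fib_err_less) (cases k, simp_all)
  then have "\<phi> * fib (k + 2) < \<phi> * (\<phi> * fib (k + 1) + \<phi> - 1)"
    using \<phi>_gt_1 by (simp add: fib_err_def fib_val_Cons fib_val_shift_Cons)
  then show ?thesis
    unfolding right_diff_distrib distrib_left \<phi>_square' \<phi>_square by simp
qed

lemma fib_successor_word:
  assumes "fib_valid P"
  obtains P' e where "fib_valid P'" "P \<noteq> [] \<and> last P \<Longrightarrow> \<not> e"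
    "\<And>L. fib_val (P' @ replicate L False) = fib_val (P @ replicate L False) + fib (L + (if e then 2 else 1))"
proof -
  obtain P' where P': "fib_valid P'" "fib_val P' = fib_val P + 1"
    by (rule fib_rep_any)
  define d where "d = int (fib_val_shift P') - int (fib_val_shift P)"
  have key: "\<phi> * d = 1 + fib_err P - fib_err P'"
    by (simp add: fib_err_def d_def P'(2) algebra_simps)
  have pos: "0 < \<phi>"
    using \<phi>_gt_1 by simp
  have "\<phi> * -1 < \<phi> * d" "\<phi> * d < \<phi> * 2"
    using key fib_err_gt[OF assms] fib_err_less[OF P'(1)] fib_err_gt[OF P'(1)] fib_err_less[OF assms]
      \<phi>_gt_1 by linarith+
  then have "-1 < d" "d < 2"
    unfolding mult_less_cancel_left_pos[OF pos] by simp_all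
  moreover have "d < 1" if "P \<noteq> [] \<and> last P"
  proof -
    have "fib_err P < \<phi> - 2"
      using fib_err_bounds[OF assms] that by simp
    then have "\<phi> * d < \<phi> * 1"
      using key fib_err_gt[OF P'(1)] by linarith
    then show "d < 1"
      unfolding mult_less_cancel_left_pos[OF pos] by simp
  qed
  ultimately have d01: "d = 0 \<or> d = 1" and "P \<noteq> [] \<and> last P \<Longrightarrow> d = 0"
    by auto
  define e where "e = (d = 1)"
  have shift: "fib_val_shift P' = fib_val_shift P + of_bool e"
    using d01 unfolding e_def d_def by auto
  show thesis
  proof (rule that[of P' e])
    show "P \<noteq> [] \<and> last P \<Longrightarrow> \<not> e"
      using \<open>P \<noteq> [] \<and> last P \<Longrightarrow> d = 0\<close> unfolding e_def by simp
    show "fib_val (P' @ replicate L False) = fib_val (P @ replicate L False) + fib (L + (if e then 2 else 1))" for L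
      by (simp add: fib_val_append P'(2) shift algebra_simps)
  qed (fact P'(1))
qed

lemma fib_scaled_gap_bounds:
  fixes n d :: nat
  assumes "fib_valid w" "fib_valid y" "n * fib_val (w @ [False]) = fib_val (y @ [False]) + d"
  defines "D \<equiv> real (n * fib_val w) - real (fib_val y)"
  shows "\<phi> * d - n - \<phi> + 1 < (1 + \<phi>) * D" and "(1 + \<phi>) * D < \<phi> * d + \<phi> * n - n + 1"
proof -
  have "real n * fib_val (w @ [False]) = fib_val (y @ [False]) + real d"
    using arg_cong[OF assms(3), of real] by simp
  then have eq: "(1 + \<phi>) * D = n * fib_err w - fib_err y + \<phi> * d"
    unfolding D_def fib_err_eq by (simp add: algebra_simps)
  have "real n * -1 \<le> n * fib_err w"
    using fib_err_gt[OF assms(1)] by (intro mult_left_mono) simp_all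
  moreover have "n * fib_err w \<le> n * (\<phi> - 1)"
    using fib_err_less[OF assms(1)] by (intro mult_left_mono) simp_all
  moreover have "n * (\<phi> - 1) = \<phi> * n - n"
    by (simp add: algebra_simps)
  ultimately
  show "\<phi> * d - n - \<phi> + 1 < (1 + \<phi>) * D" "(1 + \<phi>) * D < \<phi> * d + \<phi> * n - n + 1"
    using eq fib_err_gt[OF assms(2)] fib_err_less[OF assms(2)] by linarith+
qed

lemma fib_prefix_gap:
  fixes n d :: nat
  assumes w: "fib_valid w" and y: "fib_valid y" and n: "1 \<le> n" "3 * n \<le> fib j"
    and d: "n * fib_val (w @ [False]) = fib_val (y @ [False]) + d" "n \<le> d" "d < n + fib (j + 4)"
  shows "fib_val y < n * fib_val w" "n * fib_val w - fib_val y + n < 2 * fib (j + 2)"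
proof -
  define D where "D = real (n * fib_val w) - real (fib_val y)"
  have gap: "\<phi> * d - n - \<phi> + 1 < (1 + \<phi>) * D" "(1 + \<phi>) * D < \<phi> * d + \<phi> * n - n + 1"
    using fib_scaled_gap_bounds[OF w y d(1)] unfolding D_def by simp_all
  have pos: "0 < \<phi>"
    using \<phi>_gt_1 by simp
  have fib_j4: "\<phi> * fib (j + 4) < \<phi> * fib (j + 3) + fib (j + 3) + 1"
    using fib_add_2_less[of "j + 2"] by (simp add: numeral_eq_Suc)
  have "\<phi> * n \<le> \<phi> * d"
    using pos d(2) by simp
  moreover have "\<phi> * (d + 1) \<le> \<phi> * (n + fib (j + 4))"
    using pos d(3) by (intro mult_left_mono) simp_all
  then have "\<phi> * d + \<phi> \<le> \<phi> * n + \<phi> * fib (j + 4)"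
    by (simp add: distrib_left)
  moreover have "0 \<le> (\<phi> - 1) * (real n - 1)"
    using \<phi>_gt_1 n(1) by simp
  then have "\<phi> + n \<le> \<phi> * n + 1"
    by (simp add: algebra_simps)
  moreover have n_real: "1 \<le> real n" "3 * real n \<le> fib j"
    using n by linarith+
  then have "3 * (\<phi> * n) \<le> \<phi> * fib j"
    using pos mult_left_mono[of "3 * real n" "fib j" \<phi>] by simp
  ultimately have "0 < (1 + \<phi>) * D"
    and "(1 + \<phi>) * D + n + \<phi> * n - (fib (j + 3) + fib j + \<phi> * fib (j + 3) + \<phi> * fib j) < 0"
    using gap fib_j4 n_real pos by linarith+
  moreover have "(1 + \<phi>) * (D + n - (real (fib (j + 3)) + real (fib j)))
      = (1 + \<phi>) * D + n + \<phi> * n - (fib (j + 3) + fib j + \<phi> * fib (j + 3) + \<phi> * fib j)"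
    by (simp add: algebra_simps)
  ultimately have "0 < (1 + \<phi>) * D" "(1 + \<phi>) * (D + n - (real (fib (j + 3)) + real (fib j))) < 0"
    by simp_all
  then have "real (fib_val y) < real (n * fib_val w)"
    and gap_real: "real (n * fib_val w) - real (fib_val y) + real n < real (fib (j + 3) + fib j)"
    using pos unfolding D_def by (simp_all add: zero_less_mult_iff mult_less_0_iff)
  then have lt: "fib_val y < n * fib_val w"
    by (simp only: of_nat_less_iff)
  then have "real (n * fib_val w - fib_val y + n) < real (fib (j + 3) + fib j)"
    using gap_real by (simp add: of_nat_diff)
  moreover have "fib (j + 3) + fib j = 2 * fib (j + 2)"
    by (simp add: numeral_eq_Suc)
  ultimately show "fib_val y < n * fib_val w" "n * fib_val w - fib_val y + n < 2 * fib (j + 2)"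
    using lt by (simp_all only: of_nat_less_iff)
qed

lemma fib_prefix_approximation:
  assumes w: "fib_valid w" "1 \<le> fib_val w" and n: "1 \<le> n" "3 * n \<le> fib j"
  obtains P d1 d2 where "fib_valid P"
    "n * fib_val w = fib_val (P @ replicate (j + 1) False) + d1"
    "n * fib_val (w @ [False]) = fib_val (P @ replicate (j + 2) False) + d2"
    "d1 + n \<le> 2 * fib (j + 2)" "d2 + 2 * n \<le> 2 * fib (j + 3)"
proof -
  have "n * 1 \<le> n * fib_val (w @ [False])"
    using w(2) by (intro mult_le_mono2) (simp add: fib_val_snoc)
  then have n_le: "n \<le> n * fib_val (w @ [False])"
    by simp
  obtain P s where Ps: "fib_valid (P @ s)" "length s = j + 2"
    "fib_val (P @ s) = n * fib_val (w @ [False]) - n"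
    by (rule fib_rep_split)
  define y where "y = P @ replicate (j + 1) False"
  define d2 where "d2 = n + fib_val s"
  have y_snoc: "y @ [False] = P @ replicate (j + 2) False"
    by (simp add: y_def replicate_append_same)
  have "fib_val (P @ replicate (j + 2) False) + fib_val s = n * fib_val (w @ [False]) - n"
    using Ps fib_val_append_pad[of P s] by simp
  then have d2: "n * fib_val (w @ [False]) = fib_val (y @ [False]) + d2"
    using n_le unfolding d2_def y_snoc by linarith
  have P: "fib_valid P" and "fib_valid s"
    using Ps(1) by (simp_all add: fib_valid_append fib_valid_Cons)
  then have y: "fib_valid y" and s: "fib_val s < fib (j + 4)"
    using fib_val_less[of s] Ps(2) unfolding y_def fib_valid_append_replicate
    by (simp_all add: numeral_eq_Suc)
  then have "d2 < n + fib (j + 4)"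
    unfolding d2_def by simp
  from fib_prefix_gap[OF w(1) y n d2 _ this] have "fib_val y < n * fib_val w"
    "n * fib_val w - fib_val y + n \<le> 2 * fib (j + 2)"
    unfolding d2_def by simp_all
  moreover have "fib (j + 4) + fib j \<le> 2 * fib (j + 3)"
    by (simp add: numeral_eq_Suc fib_Suc_mono)
  then have "d2 + 2 * n \<le> 2 * fib (j + 3)"
    using s n unfolding d2_def by linarith
  ultimately show thesis
    using that[of P "n * fib_val w - fib_val y" d2] P d2 y_snoc y_def by simp
qed

section \<open>Shifted values as generalized Fibonacci sequences\<close>

lemma gen_fib_add: "gen_fib (a + a') (b + b') r = gen_fib a b r + gen_fib a' b' r"
  by (induction r rule: fib.induct) (simp_all add: gen_fib_recurrence del: gen_fib.simps(3))

lemma gen_fib_mult: "gen_fib (k * a) (k * b) r = k * gen_fib a b r"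
  by (induction r rule: fib.induct)
    (simp_all add: gen_fib_recurrence distrib_left del: gen_fib.simps(3))

lemma gen_fib_mono: "a \<le> a' \<Longrightarrow> b \<le> b' \<Longrightarrow> gen_fib a b r \<le> gen_fib a' b' r"
  using gen_fib_add[of a "a' - a" b "b' - b" r] by simp

lemma scaled_fib_val_append:
  assumes "n * fib_val w = fib_val (P @ replicate (j + 1) False) + d1"
    and "n * fib_val (w @ [False]) = fib_val (P @ replicate (j + 2) False) + d2"
  shows "n * fib_val (w @ u)
    = fib_val (P @ replicate (j + 1 + length u) False) + (gen_fib d1 d2 (length u) + n * fib_val u)"
proof -
  have P0: "(P @ replicate (j + 1) False) @ [False] = P @ replicate (j + 2) False"
    by (simp add: replicate_append_same)
  have "n * fib_val (w @ u) = gen_fib (n * fib_val w) (n * fib_val (w @ [False])) (length u) + n * fib_val u"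
    by (simp add: fib_val_append_pad[of w u] fib_val_append_replicate gen_fib_mult distrib_left)
  also have "\<dots> = fib_val ((P @ replicate (j + 1) False) @ replicate (length u) False)
                   + gen_fib d1 d2 (length u) + n * fib_val u"
    unfolding assms gen_fib_add fib_val_append_replicate[of "P @ replicate (j + 1) False"] P0 ..
  finally show ?thesis
    by (simp add: replicate_add)
qed

lemma scaled_offset_less:
  assumes "d1 + n \<le> 2 * fib (j + 2)" "d2 + 2 * n \<le> 2 * fib (j + 3)" "v < fib (r + 2)" "c < n"
  shows "gen_fib d1 d2 r + n * v + c < 2 * fib (j + 1 + r + 1)"
proof -
  have "n * v + c < n * fib (r + 2)"
    using assms(3,4) mult_le_mono2[of "Suc v" "fib (r + 2)" n] by simp
  also have "\<dots> = gen_fib n (2 * n) r"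
    using gen_fib_mult[of n 1 2 r] gen_fib_fib[of 2 r] by (simp add: numeral_eq_Suc mult.commute)
  finally have "gen_fib d1 d2 r + n * v + c < gen_fib (d1 + n) (d2 + 2 * n) r"
    by (simp add: gen_fib_add)
  also have "\<dots> \<le> gen_fib (2 * fib (j + 2)) (2 * fib (j + 3)) r"
    by (intro gen_fib_mono assms(1,2))
  also have "\<dots> = 2 * fib (j + 1 + r + 1)"
  proof -
    have "fib (j + 3) = fib (Suc (j + 2))" "j + 2 + r = j + 1 + r + 1"
      by (simp_all add: numeral_eq_Suc)
    then show ?thesis
      by (simp only: gen_fib_mult gen_fib_fib)
  qed
  finally show ?thesis .
qed

section \<open>Automata from finitely many residuals\<close>

lemma run_append: "run \<delta> q (x @ y) = (case run \<delta> q x of None \<Rightarrow> None | Some q' \<Rightarrow> run \<delta> q' y)"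
  by (induction x arbitrary: q) (auto split: option.splits)

lemma run_closed:
  "(\<forall>q\<in>Q. \<forall>a q'. \<delta> q a = Some q' \<longrightarrow> q' \<in> Q) \<Longrightarrow> q \<in> Q \<Longrightarrow> run \<delta> q x = Some q' \<Longrightarrow> q' \<in> Q"
  by (induction x arbitrary: q) (auto split: option.splits)

lemma fib_dfao_from_finite_residuals:
  fixes G :: "bool list \<Rightarrow> 'o option"
  assumes fin: "finite (range (\<lambda>w u. G (w @ u)))"
    and zeros: "\<And>k x. G (replicate k False @ x) = G x"
  obtains Q :: "nat set" and \<delta> q0 \<tau> where "fib_dfao Q \<delta> q0 \<tau>"
    "card Q \<le> card (range (\<lambda>w u. G (w @ u)))" "\<And>x. G x \<noteq> None \<Longrightarrow> map_option \<tau> (run \<delta> q0 x) = G x"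
proof -
  define res where "res w = (\<lambda>u. G (w @ u))" for w
  define rep where "rep r = (SOME v. res v = r)" for r
  define st where "st w = to_nat (rep (res w))" for w
  define \<delta> where "\<delta> q a = Some (st (from_nat q @ [a]))" for q a
  define \<tau> where "\<tau> q = the (G (from_nat q))" for q
  have res_rep: "res (from_nat (st w)) = res w" for w
    using someI[of "\<lambda>v. res v = res w" w] unfolding st_def rep_def by simp
  have st_cong: "res v = res w \<Longrightarrow> st v = st w" for v w
    unfolding st_def by simp
  have \<delta>_st: "\<delta> (st w) a = Some (st (w @ [a]))" for w a
    using fun_cong[OF res_rep, of w "a # _"] unfolding \<delta>_def res_def
    by (auto intro!: st_cong simp: res_def)
  have run_st: "run \<delta> (st w) x = Some (st (w @ x))" for w x
    by (induction x arbitrary: w) (simp_all add: \<delta>_st)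
  have \<tau>_st: "\<tau> (st w) = the (G w)" for w
    using fun_cong[OF res_rep, of w "[]"] unfolding \<tau>_def res_def by simp
  have range_st: "range st = (to_nat \<circ> rep) ` range res"
    unfolding st_def by auto
  show thesis
  proof (rule that[of "range st" \<delta> "st []" \<tau>])
    show "fib_dfao (range st) \<delta> (st []) \<tau>"
      unfolding fib_dfao_def
    proof (intro conjI ballI allI impI)
      show "finite (range st)"
        using fin unfolding range_st res_def by simp
      show "map_option \<tau> (run \<delta> (st []) (replicate k False @ x)) = map_option \<tau> (run \<delta> (st []) x)" for k x
        unfolding run_st using st_cong[of "replicate k False @ x" x] zeros by (simp add: res_def)
    qed (auto simp: \<delta>_st)
    show "card (range st) \<le> card (range (\<lambda>w u. G (w @ u)))"
      unfolding range_st res_def[abs_def] by (rule card_image_le[OF fin[unfolded res_def[abs_def]]])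
    show "G x \<noteq> None \<Longrightarrow> map_option \<tau> (run \<delta> (st []) x) = G x" for x
      by (auto simp: run_st \<tau>_st)
  qed
qed

section \<open>Residuals of a linear subsequence\<close>

locale fib_linear_subsequence =
  fixes Q :: "nat set" and \<delta> :: "nat \<Rightarrow> bool \<Rightarrow> nat option" and q0 :: nat and \<tau> :: "nat \<Rightarrow> 'o"
    and h :: "nat \<Rightarrow> 'o" and n c j :: nat
  assumes dfao: "fib_dfao Q \<delta> q0 \<tau>" and generates: "fib_generates \<delta> q0 \<tau> h"
    and n_pos: "1 \<le> n" and c_less: "c < n" and fib_j: "3 * n \<le> fib j" "fib j \<le> 6 * n"
begin

definition subseq_output :: "bool list \<Rightarrow> 'o option" where
  "subseq_output x = (if fib_valid x then Some (h (n * fib_val x + c)) else None)"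

definition read_suffix :: "nat \<Rightarrow> bool \<Rightarrow> nat \<Rightarrow> nat \<Rightarrow> 'o option" where
  "read_suffix q b L N = map_option \<tau> (run \<delta> q (fib_rep b L N))"

(* The parameters are the states q, q' reached on P and on its successor, the last digits b of P
   and b_w of w, the carry flag e of the successor, and the offsets d1, d2 of
   fib_prefix_approximation. *)
definition residual_model :: "nat \<times> nat \<times> bool \<times> bool \<times> bool \<times> nat \<times> nat \<Rightarrow> bool list \<Rightarrow> 'o option" where
  "residual_model = (\<lambda>(q, q', b, e, b_w, d1, d2) u.
     if fib_valid (b_w # u) then
       let L = j + 1 + length u; off = gen_fib d1 d2 (length u) + n * fib_val u + c
       in if off < fib (L + (if b then 1 else 2)) then read_suffix q b L off
          else read_suffix q' True L (off - fib (L + (if e then 2 else 1)))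
     else None)"

definition model_params :: "(nat \<times> nat \<times> bool \<times> bool \<times> bool \<times> nat \<times> nat) set" where
  "model_params = Q \<times> Q \<times> UNIV \<times> UNIV \<times> UNIV \<times> {..<36 * n} \<times> {..<60 * n}"

lemma run_valid: "fib_valid x \<Longrightarrow> \<exists>q\<in>Q. run \<delta> q0 x = Some q"
  using generates dfao run_closed[of Q \<delta> q0 x] unfolding fib_generates_def fib_dfao_def
  by (cases "run \<delta> q0 x") force+

lemma read_suffix_eq:
  assumes "fib_valid P" "run \<delta> q0 P = Some q" "P \<noteq> [] \<and> last P \<Longrightarrow> b"
    and "N < fib (L + (if b then 1 else 2))"
  shows "read_suffix q b L N = Some (h (fib_val (P @ replicate L False) + N))"
proof -
  define R where "R = fib_rep b L N"
  have R: "length R = L" "fib_valid (b # R)" "fib_val R = N"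
    using fib_rep[OF assms(4)] unfolding R_def by simp_all
  have "fib_valid (a # R)" if "a \<Longrightarrow> b" for a
    using R(2) that by (cases a; cases b) (auto simp: fib_valid_Cons)
  then have "fib_valid (P @ R)"
    using assms(1,3) by (simp add: fib_valid_append)
  then have "map_option \<tau> (run \<delta> q0 (P @ R)) = Some (h (fib_val (P @ R)))"
    using generates unfolding fib_generates_def by blast
  then show ?thesis
    using assms(2) R by (simp add: read_suffix_def R_def[symmetric] run_append fib_val_append_pad[of P R])
qed

lemma read_with_carry:
  assumes P: "fib_valid P" "run \<delta> q0 P = Some q" and P': "fib_valid P'" "run \<delta> q0 P' = Some q'"
    and e: "P \<noteq> [] \<and> last P \<Longrightarrow> \<not> e"
    and succ: "fib_val (P' @ replicate L False) = fib_val (P @ replicate L False) + fib (L + (if e then 2 else 1))"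
    and off: "off < 2 * fib (L + 1)" and b_def: "b = (P \<noteq> [] \<and> last P)"
  shows "Some (h (fib_val (P @ replicate L False) + off))
    = (if off < fib (L + (if b then 1 else 2)) then read_suffix q b L off
       else read_suffix q' True L (off - fib (L + (if e then 2 else 1))))"
proof (cases "off < fib (L + (if b then 1 else 2))")
  case True
  then show ?thesis
    using read_suffix_eq[OF P, of b off L] b_def by simp
next
  case False
  define carry where "carry = fib (L + (if e then 2 else 1))"
  have "fib (L + 1) \<le> carry" "carry \<le> fib (L + (if b then 1 else 2))"
    using e fib_mono[of "L + 1" "L + 2"] unfolding carry_def b_def by auto
  then have "carry \<le> off" "off - carry < fib (L + 1)"
    using False off by linarith+
  then show ?thesis
    using False read_suffix_eq[OF P', of True "off - carry" L] succ unfolding carry_def by simp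
qed

lemma fib_j_bounds: "2 * fib (j + 2) \<le> 36 * n" "2 * fib (j + 3) \<le> 60 * n"
proof -
  obtain i where "j = Suc i"
    using fib_j(1) n_pos by (cases j) auto
  then have "fib (j + 1) \<le> 2 * fib j"
    using fib_Suc_mono[of i] by simp
  moreover have "fib (j + 2) = fib (j + 1) + fib j" "fib (j + 3) = fib (j + 2) + fib (j + 1)"
    by (simp_all add: numeral_eq_Suc)
  ultimately show "2 * fib (j + 2) \<le> 36 * n" "2 * fib (j + 3) \<le> 60 * n"
    using fib_j(2) by linarith+
qed

lemma residual_in_model:
  assumes w: "fib_valid w" "1 \<le> fib_val w"
  shows "(\<lambda>u. subseq_output (w @ u)) \<in> residual_model ` model_params"
proof -
  obtain P d1 d2 where P: "fib_valid P"
    and d: "n * fib_val w = fib_val (P @ replicate (j + 1) False) + d1"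
      "n * fib_val (w @ [False]) = fib_val (P @ replicate (j + 2) False) + d2"
    and d_le: "d1 + n \<le> 2 * fib (j + 2)" "d2 + 2 * n \<le> 2 * fib (j + 3)"
    using fib_prefix_approximation[OF w n_pos fib_j(1)] by blast
  obtain P' e where P': "fib_valid P'" "P \<noteq> [] \<and> last P \<Longrightarrow> \<not> e"
    "\<And>L. fib_val (P' @ replicate L False) = fib_val (P @ replicate L False) + fib (L + (if e then 2 else 1))"
    using fib_successor_word[OF P] by blast
  obtain q q' where q: "q \<in> Q" "run \<delta> q0 P = Some q" and q': "q' \<in> Q" "run \<delta> q0 P' = Some q'"
    using run_valid[OF P] run_valid[OF P'(1)] by blast
  define b where "b = (P \<noteq> [] \<and> last P)"
  define t where "t = (q, q', b, e, w \<noteq> [] \<and> last w, d1, d2)"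
  have "t \<in> model_params"
    using q q' d_le fib_j_bounds n_pos unfolding t_def model_params_def by auto
  moreover have "subseq_output (w @ u) = residual_model t u" for u
  proof (cases "fib_valid ((w \<noteq> [] \<and> last w) # u)")
    case True
    define L where "L = j + 1 + length u"
    define off where "off = gen_fib d1 d2 (length u) + n * fib_val u + c"
    have "off < 2 * fib (L + 1)"
      using scaled_offset_less[OF d_le fib_val_less c_less, of u] True
      unfolding off_def L_def by (simp add: fib_valid_Cons)
    then have "Some (h (fib_val (P @ replicate L False) + off))
        = (if off < fib (L + (if b then 1 else 2)) then read_suffix q b L off
           else read_suffix q' True L (off - fib (L + (if e then 2 else 1))))"
      using read_with_carry[OF P q(2) P'(1) q'(2) P'(2) P'(3)] b_def by blast
    also have "\<dots> = residual_model t u"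
      unfolding residual_model_def t_def L_def off_def by (simp only: prod.case Let_def if_P[OF True])
    finally show ?thesis
      using True w(1) scaled_fib_val_append[OF d, of u]
      by (simp add: subseq_output_def fib_valid_append L_def off_def add.assoc)
  qed (simp add: subseq_output_def residual_model_def t_def fib_valid_append)
  ultimately show ?thesis
    by blast
qed

lemma residuals_subset:
  "range (\<lambda>w u. subseq_output (w @ u)) \<subseteq> {\<lambda>u. None, subseq_output} \<union> residual_model ` model_params"
proof
  fix g
  assume "g \<in> range (\<lambda>w u. subseq_output (w @ u))"
  then obtain w where g: "g = (\<lambda>u. subseq_output (w @ u))"
    by blast
  consider "\<not> fib_valid w" | "fib_valid w" "fib_val w = 0" | "fib_valid w" "1 \<le> fib_val w"
    by linarith
  then show "g \<in> {\<lambda>u. None, subseq_output} \<union> residual_model ` model_params"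
  proof cases
    case 1
    then show ?thesis
      by (simp add: g subseq_output_def fib_valid_append)
  next
    case 2
    then have "w = replicate (length w) False"
      by (simp add: fib_val_eq_0D)
    then have "g = subseq_output"
      unfolding g subseq_output_def
      by (metis fib_val_replicate_append fib_valid_replicate_append)
    then show ?thesis
      by simp
  next
    case 3
    then show ?thesis
      using residual_in_model g by blast
  qed
qed

lemma card_residuals:
  "finite (range (\<lambda>w u. subseq_output (w @ u)))"
  "card (range (\<lambda>w u. subseq_output (w @ u))) \<le> 17282 * card Q ^ 2 * n ^ 4"
proof -
  have fin: "finite model_params"
    using dfao unfolding model_params_def fib_dfao_def by simp
  then show "finite (range (\<lambda>w u. subseq_output (w @ u)))"
    using finite_subset[OF residuals_subset] by simp
  have "card (range (\<lambda>w u. subseq_output (w @ u)))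
      \<le> card ({\<lambda>u. None, subseq_output} \<union> residual_model ` model_params)"
    using fin residuals_subset by (intro card_mono) simp_all
  also have "\<dots> \<le> card {\<lambda>u. None, subseq_output} + card (residual_model ` model_params)"
    by (rule card_Un_le)
  also have "\<dots> \<le> 2 + card model_params"
    using card_image_le[OF fin, of residual_model] by (simp add: card_insert_if)
  also have "card model_params = 17280 * (card Q ^ 2 * n ^ 2)"
    unfolding model_params_def by (simp add: card_cartesian_product power2_eq_square)
  also have "2 + 17280 * (card Q ^ 2 * n ^ 2) \<le> 17282 * (card Q ^ 2 * n ^ 4)"
  proof -
    have "1 \<le> card Q"
      using dfao card_0_eq[of Q] unfolding fib_dfao_def by fastforce
    then have "1 \<le> card Q ^ 2 * n ^ 2" "card Q ^ 2 * n ^ 2 \<le> card Q ^ 2 * n ^ 4"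
      using n_pos by (simp_all add: power_increasing)
    then show ?thesis
      by linarith
  qed
  finally show "card (range (\<lambda>w u. subseq_output (w @ u))) \<le> 17282 * card Q ^ 2 * n ^ 4"
    by (simp add: mult.assoc)
qed

end

theorem theorem17:
  shows "\<exists>K::real. \<forall>(n::nat) (c::nat) (m::nat) (h :: nat \<Rightarrow> 'o)
            (Q :: nat set) \<delta> q0 (\<tau> :: nat \<Rightarrow> 'o).
     n \<ge> 1 \<longrightarrow> c < n \<longrightarrow> fib_dfao Q \<delta> q0 \<tau> \<longrightarrow> card Q = m \<longrightarrow>
     fib_generates \<delta> q0 \<tau> h \<longrightarrow>
     (\<exists>(Q' :: nat set) \<delta>' q0' (\<tau>' :: nat \<Rightarrow> 'o).
        fib_dfao Q' \<delta>' q0' \<tau>' \<and> real (card Q') \<le> K * real m ^ 2 * real n ^ 4 \<and>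
        fib_generates \<delta>' q0' \<tau>' (\<lambda>i. h (n * i + c)))"
proof (intro exI[of _ 17282] allI impI)
  fix n c m :: nat and h :: "nat \<Rightarrow> 'o" and Q :: "nat set" and \<delta> q0 and \<tau> :: "nat \<Rightarrow> 'o"
  assume n_pos: "n \<ge> 1" and c_less: "c < n" and dfao: "fib_dfao Q \<delta> q0 \<tau>" and m: "card Q = m"
    and generates: "fib_generates \<delta> q0 \<tau> h"
  obtain j where "3 * n \<le> fib j" "fib j \<le> 6 * n"
    using fib_between[of "3 * n"] n_pos by auto
  then interpret fib_linear_subsequence Q \<delta> q0 \<tau> h n c j
    using dfao generates n_pos c_less by unfold_locales
  have zeros: "subseq_output (replicate k False @ x) = subseq_output x" for k x
    by (simp add: subseq_output_def)
  obtain Q' :: "nat set" and \<delta>' q0' \<tau>' where dfao': "fib_dfao Q' \<delta>' q0' \<tau>'"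
    and card: "card Q' \<le> card (range (\<lambda>w u. subseq_output (w @ u)))"
    and generated: "\<And>x. subseq_output x \<noteq> None \<Longrightarrow> map_option \<tau>' (run \<delta>' q0' x) = subseq_output x"
    using fib_dfao_from_finite_residuals[OF card_residuals(1) zeros] by blast
  have "real (card Q') \<le> real (17282 * m ^ 2 * n ^ 4)"
    using le_trans[OF card card_residuals(2)] m by (simp only: of_nat_le_iff)
  moreover have "fib_generates \<delta>' q0' \<tau>' (\<lambda>i. h (n * i + c))"
    using generated unfolding fib_generates_def subseq_output_def by simp
  ultimately show "\<exists>(Q' :: nat set) \<delta>' q0' (\<tau>' :: nat \<Rightarrow> 'o).
        fib_dfao Q' \<delta>' q0' \<tau>' \<and> real (card Q') \<le> 17282 * real m ^ 2 * real n ^ 4 \<and>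
        fib_generates \<delta>' q0' \<tau>' (\<lambda>i. h (n * i + c))"
    using dfao' by auto
qed

end
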